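(* Let $(X,d)$ be a bicomplete quasi-pseudometric space. Let $J:X\to X$ be a continuous single-valued map such that $r\,d(x,y)\le d(Jx,Jy)$ for all $x,y\in X$, for some constant $r>0$. Let $F:X\to CB(X)$ be a set-valued map such that $$H(Fx,Fy)\le \alpha\big[d(Jx,Fx)+d(Jy,Fy)\big]\quad\text{for all }x,y\in X,$$ where $\alpha\in(0,1/2)$. If $J$ and $F$ have the approximate mix-point property, then $F$ has a $J$-fixed point, i.e. there is $x\in X$ with $Jx\in Fx$.
   Context: A quasi-pseudometric on a nonempty set $X$ is a map $d:X\times X\to[0,\infty)$ with $d(x,x)=0$ and $d(x,z)\le d(x,y)+d(y,z)$ for all $x,y,z$; it is $T_0$ if $d(x,y)=0=d(y,x)$ implies $x=y$. Write $d^s(x,y)=\max\{d(x,y),d(y,x)\}$. The space $(X,d)$ is bicomplete if $d$ is $T_0$ and the metric $d^s$ is complete. For $x\in X$ and nonempty $A\subseteq X$: $d(x,A)=\inf_{a\in A}d(x,a)$, $d(A,x)=\inf_{a\in A}d(a,x)$. For nonempty $A,B\subseteq X$: $H(A,B)=\max\{\sup_{a\in A}d(a,B),\ \sup_{b\in B}d(A,b)\}$. $CB(X)$ denotes the family of nonempty $d^s$-bounded, $\tau(d^s)$-closed subsets of $X$; continuity of $J$ is with respect to $\tau(d^s)$. $J$ and $F$ have the approximate mix-point property if $\inf_{x\in X}\sup_{y\in Fx}d^s(Jx,y)=0$. *)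

theory Defs
  imports "HOL-Analysis.Analysis"
begin

definition quasi_pseudometric :: "('a \<Rightarrow> 'a \<Rightarrow> real) \<Rightarrow> bool" where
  "quasi_pseudometric d \<longleftrightarrow> (\<forall>x y. 0 \<le> d x y) \<and> (\<forall>x. d x x = 0) \<and>
     (\<forall>x y z. d x z \<le> d x y + d y z)"

definition T0_qpm :: "('a \<Rightarrow> 'a \<Rightarrow> real) \<Rightarrow> bool" where
  "T0_qpm d \<longleftrightarrow> (\<forall>x y. d x y = 0 \<and> d y x = 0 \<longrightarrow> x = y)"

definition sym_dist :: "('a \<Rightarrow> 'a \<Rightarrow> real) \<Rightarrow> 'a \<Rightarrow> 'a \<Rightarrow> real" where
  "sym_dist d x y = max (d x y) (d y x)"

definition ds_complete :: "('a \<Rightarrow> 'a \<Rightarrow> real) \<Rightarrow> bool" where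
  "ds_complete d \<longleftrightarrow> (\<forall>s :: nat \<Rightarrow> 'a.
     (\<forall>e>0. \<exists>N. \<forall>m\<ge>N. \<forall>n\<ge>N. sym_dist d (s m) (s n) < e) \<longrightarrow>
     (\<exists>x. \<forall>e>0. \<exists>N. \<forall>n\<ge>N. sym_dist d (s n) x < e))"

definition bicomplete :: "('a \<Rightarrow> 'a \<Rightarrow> real) \<Rightarrow> bool" where
  "bicomplete d \<longleftrightarrow> quasi_pseudometric d \<and> T0_qpm d \<and> ds_complete d"

definition dist_pt_set :: "('a \<Rightarrow> 'a \<Rightarrow> real) \<Rightarrow> 'a \<Rightarrow> 'a set \<Rightarrow> real" where
  "dist_pt_set d x A = (INF a\<in>A. d x a)"

definition dist_set_pt :: "('a \<Rightarrow> 'a \<Rightarrow> real) \<Rightarrow> 'a set \<Rightarrow> 'a \<Rightarrow> real" where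
  "dist_set_pt d A x = (INF a\<in>A. d a x)"

definition hausdorff_qpm :: "('a \<Rightarrow> 'a \<Rightarrow> real) \<Rightarrow> 'a set \<Rightarrow> 'a set \<Rightarrow> real" where
  "hausdorff_qpm d A B = max (SUP a\<in>A. dist_pt_set d a B) (SUP b\<in>B. dist_set_pt d A b)"

definition ds_bounded :: "('a \<Rightarrow> 'a \<Rightarrow> real) \<Rightarrow> 'a set \<Rightarrow> bool" where
  "ds_bounded d A \<longleftrightarrow> (\<exists>M. \<forall>a\<in>A. \<forall>b\<in>A. sym_dist d a b \<le> M)"

definition ds_closed :: "('a \<Rightarrow> 'a \<Rightarrow> real) \<Rightarrow> 'a set \<Rightarrow> bool" where
  "ds_closed d A \<longleftrightarrow> (\<forall>x. (\<forall>e>0. \<exists>a\<in>A. sym_dist d x a < e) \<longrightarrow> x \<in> A)"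

definition CB :: "('a \<Rightarrow> 'a \<Rightarrow> real) \<Rightarrow> 'a set set" where
  "CB d = {A. A \<noteq> {} \<and> ds_bounded d A \<and> ds_closed d A}"

definition ds_continuous :: "('a \<Rightarrow> 'a \<Rightarrow> real) \<Rightarrow> ('a \<Rightarrow> 'a) \<Rightarrow> bool" where
  "ds_continuous d J \<longleftrightarrow> (\<forall>x. \<forall>e>0. \<exists>\<delta>>0. \<forall>y. sym_dist d x y < \<delta> \<longrightarrow>
      sym_dist d (J x) (J y) < e)"

definition approx_mix_point :: "('a \<Rightarrow> 'a \<Rightarrow> real) \<Rightarrow> ('a \<Rightarrow> 'a) \<Rightarrow> ('a \<Rightarrow> 'a set) \<Rightarrow> bool" where
  "approx_mix_point d J F \<longleftrightarrow> (INF x. (SUP y\<in>F x. sym_dist d (J x) y)) = 0"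

end

theory Submission
  imports Defs
begin

text \<open>Choose \<open>x\<^sub>n\<close> with \<open>F x\<^sub>n\<close> within \<open>\<epsilon>\<^sub>n \<rightarrow> 0\<close> of \<open>J x\<^sub>n\<close> in \<open>d\<^sup>s\<close>. The Kannan-type
  condition bounds \<open>H(F x\<^sub>m, F x\<^sub>n)\<close> by \<open>\<epsilon>\<^sub>m + \<epsilon>\<^sub>n\<close>, hence \<open>d(J x\<^sub>m, J x\<^sub>n) \<le> 2(\<epsilon>\<^sub>m + \<epsilon>\<^sub>n)\<close>,
  and the expansivity of \<open>J\<close> makes \<open>(x\<^sub>n)\<close> \<open>d\<^sup>s\<close>-Cauchy. For its limit \<open>\<xi>\<close>, continuity gives
  \<open>J x\<^sub>n \<rightarrow> J \<xi>\<close>, and passing to the limit in the Kannan-type condition gives first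
  \<open>(1 - \<alpha>) d(J \<xi>, F \<xi>) \<le> 0\<close> and then \<open>d(a, J \<xi>) = 0\<close> for all \<open>a \<in> F \<xi>\<close>; so \<open>J \<xi>\<close> is
  \<open>d\<^sup>s\<close>-adherent to the closed set \<open>F \<xi>\<close>.\<close>

lemma qpm_nonneg: "quasi_pseudometric d \<Longrightarrow> 0 \<le> d x y"
  and qpm_triangle: "quasi_pseudometric d \<Longrightarrow> d x z \<le> d x y + d y z"
  unfolding quasi_pseudometric_def by blast+

lemma sym_dist_ge_left: "d x y \<le> sym_dist d x y"
  and sym_dist_ge_right: "d y x \<le> sym_dist d x y"
  and sym_dist_commute: "sym_dist d x y = sym_dist d y x"
  unfolding sym_dist_def by auto

lemma sym_dist_nonneg: "quasi_pseudometric d \<Longrightarrow> 0 \<le> sym_dist d x y"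
  unfolding sym_dist_def by (simp add: qpm_nonneg le_max_iff_disj)

lemma sym_dist_triangle:
  assumes "quasi_pseudometric d"
  shows "sym_dist d x z \<le> sym_dist d x y + sym_dist d y z"
  using qpm_triangle[OF assms, of x z y] qpm_triangle[OF assms, of z x y]
  unfolding sym_dist_def by linarith

lemma bdd_below_dist_image: "quasi_pseudometric d \<Longrightarrow> bdd_below ((\<lambda>a. d x a) ` A)"
  by (rule bdd_belowI2[where m=0]) (rule qpm_nonneg)

lemma dist_pt_set_le: "quasi_pseudometric d \<Longrightarrow> a \<in> A \<Longrightarrow> dist_pt_set d x A \<le> d x a"
  unfolding dist_pt_set_def by (rule cINF_lower[OF bdd_below_dist_image])

lemma dist_pt_set_nonneg: "quasi_pseudometric d \<Longrightarrow> A \<noteq> {} \<Longrightarrow> 0 \<le> dist_pt_set d x A"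
  unfolding dist_pt_set_def by (rule cINF_greatest) (auto intro: qpm_nonneg)

lemma dist_pt_set_triangle:
  assumes "quasi_pseudometric d" "A \<noteq> {}"
  shows "dist_pt_set d u A \<le> d u a + dist_pt_set d a A"
proof -
  have "dist_pt_set d u A - d u a \<le> d a b" if "b \<in> A" for b
    using dist_pt_set_le[OF assms(1) that, of u] qpm_triangle[OF assms(1), of u b a] by linarith
  then have "dist_pt_set d u A - d u a \<le> dist_pt_set d a A"
    unfolding dist_pt_set_def[of d a] using assms(2) by (intro cINF_greatest) auto
  then show ?thesis by linarith
qed

lemma dist_le_dist_pt_set_add:
  assumes "quasi_pseudometric d" "A \<noteq> {}" "\<forall>b\<in>A. d b w \<le> c"
  shows "d u w \<le> dist_pt_set d u A + c"
proof -
  have "d u w - c \<le> d u b" if "b \<in> A" for b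
    using assms(3) that qpm_triangle[OF assms(1), of u w b] by force
  then have "d u w - c \<le> dist_pt_set d u A"
    unfolding dist_pt_set_def using assms(2) by (intro cINF_greatest) auto
  then show ?thesis by linarith
qed

lemma dist_pt_set_le_hausdorff:
  assumes "quasi_pseudometric d" "A \<in> CB d" "B \<in> CB d" "a \<in> A"
  shows "dist_pt_set d a B \<le> hausdorff_qpm d A B"
proof -
  obtain M where M: "\<forall>x\<in>A. \<forall>y\<in>A. sym_dist d x y \<le> M"
    using assms(2) unfolding CB_def ds_bounded_def by blast
  obtain b where b: "b \<in> B" using assms(3) unfolding CB_def by blast
  have "bdd_above ((\<lambda>x. dist_pt_set d x B) ` A)"
  proof (rule bdd_aboveI2[where M="M + d a b"])
    fix x assume "x \<in> A"
    then have "d x a \<le> M" using M assms(4) sym_dist_ge_left[of d x a] by fastforce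
    then show "dist_pt_set d x B \<le> M + d a b"
      using dist_pt_set_le[OF assms(1) b, of x] qpm_triangle[OF assms(1), of x b a] by linarith
  qed
  then show ?thesis
    unfolding hausdorff_qpm_def using cSUP_upper[OF assms(4)] by fastforce
qed

lemma dist_pt_set_le_via_hausdorff:
  assumes "quasi_pseudometric d" "A \<in> CB d" "B \<in> CB d" "a \<in> A"
  shows "dist_pt_set d u B \<le> d u a + hausdorff_qpm d A B"
  using dist_pt_set_triangle[OF assms(1), of B u a] dist_pt_set_le_hausdorff[OF assms]
    assms(3) unfolding CB_def by force

lemma dist_pt_set_lessD:
  assumes "quasi_pseudometric d" "A \<noteq> {}" "dist_pt_set d x A < c"
  shows "\<exists>a\<in>A. d x a < c"
  using assms(3) unfolding dist_pt_set_def
  by (subst (asm) cINF_less_iff[OF assms(2) bdd_below_dist_image[OF assms(1)]])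

lemma mem_CB_if_dist_zero:
  assumes "quasi_pseudometric d" "A \<in> CB d"
    and "dist_pt_set d p A = 0" "\<forall>a\<in>A. d a p \<le> 0"
  shows "p \<in> A"
proof -
  have "\<exists>a\<in>A. sym_dist d p a < e" if "e > 0" for e
  proof -
    have "A \<noteq> {}" using assms(2) unfolding CB_def by blast
    then obtain a where a: "a \<in> A" "d p a < e"
      using dist_pt_set_lessD[OF assms(1), of A p e] assms(3) \<open>e > 0\<close> by auto
    moreover have "d a p < e" using assms(4) a(1) \<open>e > 0\<close> by fastforce
    ultimately show ?thesis unfolding sym_dist_def by auto
  qed
  then show ?thesis using assms(2) unfolding CB_def ds_closed_def by blast
qed

lemma approx_mix_point_witness:
  assumes "quasi_pseudometric d" "\<And>x. F x \<in> CB d" "approx_mix_point d J F" "e > 0"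
  shows "\<exists>x. \<forall>y\<in>F x. sym_dist d (J x) y < e"
proof -
  define g where "g x = (SUP y\<in>F x. sym_dist d (J x) y)" for x
  have bdd: "bdd_above ((\<lambda>y. sym_dist d (J x) y) ` F x)" for x
  proof -
    obtain M where M: "\<forall>a\<in>F x. \<forall>b\<in>F x. sym_dist d a b \<le> M"
      using assms(2)[of x] unfolding CB_def ds_bounded_def by blast
    obtain y0 where "y0 \<in> F x" using assms(2)[of x] unfolding CB_def by blast
    show ?thesis
    proof (rule bdd_aboveI2[where M="sym_dist d (J x) y0 + M"])
      fix y assume "y \<in> F x"
      then show "sym_dist d (J x) y \<le> sym_dist d (J x) y0 + M"
        using M \<open>y0 \<in> F x\<close> sym_dist_triangle[OF assms(1), of "J x" y y0] by force
    qed
  qed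
  have "\<exists>x. g x < e"
  proof (rule ccontr)
    assume "\<nexists>x. g x < e"
    then have "e \<le> (INF x. g x)" by (intro cINF_greatest) (auto simp: not_less)
    then show False using assms(3,4) unfolding approx_mix_point_def g_def by linarith
  qed
  then obtain x where "g x < e" by blast
  then show ?thesis unfolding g_def using cSUP_upper[OF _ bdd] order_le_less_trans by blast
qed

definition ds_cauchy :: "('a \<Rightarrow> 'a \<Rightarrow> real) \<Rightarrow> (nat \<Rightarrow> 'a) \<Rightarrow> bool" where
  "ds_cauchy d s \<longleftrightarrow> (\<forall>e>0. \<exists>N. \<forall>m\<ge>N. \<forall>n\<ge>N. sym_dist d (s m) (s n) < e)"

lemma sym_dist_LIMSEQ_zero_iff:
  assumes "quasi_pseudometric d"
  shows "(\<lambda>n. sym_dist d (s n) x) \<longlonglongrightarrow> 0 \<longleftrightarrow> (\<forall>e>0. \<exists>N. \<forall>n\<ge>N. sym_dist d (s n) x < e)"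
  unfolding LIMSEQ_iff using sym_dist_nonneg[OF assms] by simp

lemma ds_cauchyI_null:
  assumes "\<delta> \<longlonglongrightarrow> 0" "\<And>m n. sym_dist d (s m) (s n) \<le> \<delta> m + \<delta> n"
  shows "ds_cauchy d s"
  unfolding ds_cauchy_def
proof (intro allI impI)
  fix e :: real assume "e > 0"
  then obtain N where N: "\<And>n. n \<ge> N \<Longrightarrow> \<bar>\<delta> n\<bar> < e / 2"
    using LIMSEQ_D[OF assms(1), of "e / 2"] by auto
  have "sym_dist d (s m) (s n) < e" if "m \<ge> N" "n \<ge> N" for m n
    using assms(2)[of m n] N[OF that(1)] N[OF that(2)] by linarith
  then show "\<exists>N. \<forall>m\<ge>N. \<forall>n\<ge>N. sym_dist d (s m) (s n) < e" by blast
qed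

lemma ds_complete_limit:
  assumes "quasi_pseudometric d" "ds_complete d" "ds_cauchy d s"
  shows "\<exists>\<xi>. (\<lambda>n. sym_dist d (s n) \<xi>) \<longlonglongrightarrow> 0"
  using assms unfolding ds_complete_def ds_cauchy_def sym_dist_LIMSEQ_zero_iff[OF assms(1)]
  by blast

lemma ds_continuous_LIMSEQ:
  assumes "quasi_pseudometric d" "ds_continuous d J" "(\<lambda>n. sym_dist d (s n) \<xi>) \<longlonglongrightarrow> 0"
  shows "(\<lambda>n. sym_dist d (J (s n)) (J \<xi>)) \<longlonglongrightarrow> 0"
  unfolding sym_dist_LIMSEQ_zero_iff[OF assms(1)]
proof (intro allI impI)
  fix e :: real assume "e > 0"
  then obtain \<eta> where "\<eta> > 0" "\<And>y. sym_dist d \<xi> y < \<eta> \<Longrightarrow> sym_dist d (J \<xi>) (J y) < e"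
    using assms(2) unfolding ds_continuous_def by blast
  moreover obtain N where "\<forall>n\<ge>N. sym_dist d (s n) \<xi> < \<eta>"
    using assms(3) \<open>\<eta> > 0\<close> unfolding sym_dist_LIMSEQ_zero_iff[OF assms(1)] by blast
  ultimately have "sym_dist d (J (s n)) (J \<xi>) < e" if "n \<ge> N" for n
    using that by (metis sym_dist_commute)
  then show "\<exists>N. \<forall>n\<ge>N. sym_dist d (J (s n)) (J \<xi>) < e" by blast
qed

locale kannan_type_pair =
  fixes d :: "'a \<Rightarrow> 'a \<Rightarrow> real" and J :: "'a \<Rightarrow> 'a" and F :: "'a \<Rightarrow> 'a set" and \<alpha> :: real
  assumes qpm: "quasi_pseudometric d"
    and F_CB: "\<And>x. F x \<in> CB d"
    and \<alpha>_nonneg: "0 \<le> \<alpha>" and \<alpha>_less_1: "\<alpha> < 1"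
    and hausdorff_le: "\<And>x y. hausdorff_qpm d (F x) (F y)
          \<le> \<alpha> * (dist_pt_set d (J x) (F x) + dist_pt_set d (J y) (F y))"
begin

lemma F_nonempty: "F x \<noteq> {}"
  using F_CB unfolding CB_def by blast

lemma dist_J_F_le:
  assumes "\<forall>y\<in>F u. sym_dist d (J u) y \<le> \<epsilon>"
  shows "dist_pt_set d (J u) (F u) \<le> \<epsilon>"
proof -
  obtain y where "y \<in> F u" using F_nonempty by blast
  then show ?thesis
    using assms dist_pt_set_le[OF qpm, of y "F u" "J u"] sym_dist_ge_left[of d "J u" y] by force
qed

lemma dist_J_J_le:
  assumes u: "\<forall>y\<in>F u. sym_dist d (J u) y \<le> \<epsilon>" and v: "\<forall>y\<in>F v. sym_dist d (J v) y \<le> \<eta>"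
  shows "d (J u) (J v) \<le> 2 * (\<epsilon> + \<eta>)"
proof -
  obtain y where y: "y \<in> F u" using F_nonempty by blast
  have "d (J u) y \<le> \<epsilon>" using u y sym_dist_ge_left[of d "J u" y] by force
  obtain z where z: "z \<in> F v" using F_nonempty by blast
  have "0 \<le> \<epsilon> + \<eta>"
    using u[rule_format, OF y] v[rule_format, OF z] sym_dist_nonneg[OF qpm, of "J u" y]
      sym_dist_nonneg[OF qpm, of "J v" z] by linarith
  have "d b (J v) \<le> \<eta>" if "b \<in> F v" for b
    using v that sym_dist_ge_right[of d b "J v"] by force
  then have "\<forall>b\<in>F v. d b (J v) \<le> \<eta>" by blast
  then have "d (J u) (J v) \<le> dist_pt_set d (J u) (F v) + \<eta>"
    by (rule dist_le_dist_pt_set_add[OF qpm F_nonempty])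
  also have "\<dots> \<le> d (J u) y + hausdorff_qpm d (F u) (F v) + \<eta>"
    using dist_pt_set_le_via_hausdorff[OF qpm F_CB F_CB y] by simp
  also have "\<dots> \<le> \<epsilon> + \<alpha> * (\<epsilon> + \<eta>) + \<eta>"
    using \<open>d (J u) y \<le> \<epsilon>\<close> hausdorff_le[of u v]
      mult_left_mono[OF add_mono[OF dist_J_F_le[OF u] dist_J_F_le[OF v]] \<alpha>_nonneg]
    by linarith
  also have "\<dots> \<le> 2 * (\<epsilon> + \<eta>)"
    using mult_right_mono[OF less_imp_le[OF \<alpha>_less_1] \<open>0 \<le> \<epsilon> + \<eta>\<close>] by simp
  finally show ?thesis .
qed

lemma approx_seq_ds_cauchy:
  assumes r: "r > 0" "\<And>x y. r * d x y \<le> d (J x) (J y)"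
    and x: "\<And>n. \<forall>y\<in>F (x n). sym_dist d (J (x n)) y \<le> \<epsilon> n" and \<epsilon>: "\<epsilon> \<longlonglongrightarrow> 0"
  shows "ds_cauchy d x"
proof (rule ds_cauchyI_null)
  show "(\<lambda>n. 2 * \<epsilon> n / r) \<longlonglongrightarrow> 0"
    using tendsto_divide_zero[OF tendsto_mult_right_zero[OF \<epsilon>]] .
  have *: "r * d (x m) (x n) \<le> 2 * (\<epsilon> m + \<epsilon> n)" for m n
    using r(2)[of "x m" "x n"] dist_J_J_le[OF x x, of m n] by linarith
  fix m n
  from *[of m n] *[of n m] have "sym_dist d (x m) (x n) \<le> 2 * (\<epsilon> m + \<epsilon> n) / r"
    unfolding sym_dist_def using r(1) by (simp add: pos_le_divide_eq mult.commute)
  then show "sym_dist d (x m) (x n) \<le> 2 * \<epsilon> m / r + 2 * \<epsilon> n / r"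
    by (simp add: add_divide_distrib distrib_left)
qed

lemma dist_J_F_limit_eq_0:
  assumes x: "\<And>n. \<forall>y\<in>F (x n). sym_dist d (J (x n)) y \<le> \<epsilon> n" and \<epsilon>: "\<epsilon> \<longlonglongrightarrow> 0"
    and lim: "(\<lambda>n. sym_dist d (J (x n)) (J \<xi>)) \<longlonglongrightarrow> 0"
  shows "dist_pt_set d (J \<xi>) (F \<xi>) = 0"
proof -
  let ?D = "dist_pt_set d (J \<xi>) (F \<xi>)"
  have "(1 - \<alpha>) * ?D \<le> sym_dist d (J (x n)) (J \<xi>) + (1 + \<alpha>) * \<epsilon> n" for n
  proof -
    obtain y where y: "y \<in> F (x n)" using F_nonempty by blast
    have "?D \<le> d (J \<xi>) (J (x n)) + dist_pt_set d (J (x n)) (F \<xi>)"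
      by (rule dist_pt_set_triangle[OF qpm F_nonempty])
    also have "\<dots> \<le> d (J \<xi>) (J (x n)) + d (J (x n)) y + hausdorff_qpm d (F (x n)) (F \<xi>)"
      using dist_pt_set_le_via_hausdorff[OF qpm F_CB F_CB y] by simp
    also have "\<dots> \<le> sym_dist d (J (x n)) (J \<xi>) + \<epsilon> n + \<alpha> * (\<epsilon> n + ?D)"
      using sym_dist_ge_right[of d "J \<xi>" "J (x n)"] x[of n] y sym_dist_ge_left[of d "J (x n)" y]
        hausdorff_le[of "x n" \<xi>] mult_left_mono[OF dist_J_F_le[OF x] \<alpha>_nonneg, of n]
      by (force simp: distrib_left)
    finally show ?thesis by (simp add: algebra_simps)
  qed
  moreover have "(\<lambda>n. sym_dist d (J (x n)) (J \<xi>) + (1 + \<alpha>) * \<epsilon> n) \<longlonglongrightarrow> 0"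
    using tendsto_add_zero[OF lim tendsto_mult_right_zero[OF \<epsilon>]] .
  ultimately have "(1 - \<alpha>) * ?D \<le> 0" by (intro LIMSEQ_le_const) auto
  then show ?thesis
    using \<alpha>_less_1 dist_pt_set_nonneg[OF qpm F_nonempty, of "J \<xi>" \<xi>] by (simp add: mult_le_0_iff)
qed

lemma dist_F_J_limit_le_0:
  assumes x: "\<And>n. \<forall>y\<in>F (x n). sym_dist d (J (x n)) y \<le> \<epsilon> n" and \<epsilon>: "\<epsilon> \<longlonglongrightarrow> 0"
    and lim: "(\<lambda>n. sym_dist d (J (x n)) (J \<xi>)) \<longlonglongrightarrow> 0"
    and a: "a \<in> F \<xi>"
  shows "d a (J \<xi>) \<le> 0"
proof -
  have "d a (J \<xi>) \<le> 2 * \<epsilon> n + sym_dist d (J (x n)) (J \<xi>)" for n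
  proof -
    have "d b (J \<xi>) \<le> \<epsilon> n + sym_dist d (J (x n)) (J \<xi>)" if "b \<in> F (x n)" for b
      using qpm_triangle[OF qpm, of b "J \<xi>" "J (x n)"] x[of n] that
        sym_dist_ge_right[of d b "J (x n)"] sym_dist_ge_left[of d "J (x n)" "J \<xi>"] by force
    then have "d a (J \<xi>) \<le> dist_pt_set d a (F (x n)) + (\<epsilon> n + sym_dist d (J (x n)) (J \<xi>))"
      by (intro dist_le_dist_pt_set_add[OF qpm F_nonempty]) blast
    also have "dist_pt_set d a (F (x n)) \<le> hausdorff_qpm d (F \<xi>) (F (x n))"
      by (rule dist_pt_set_le_hausdorff[OF qpm F_CB F_CB a])
    also have "\<dots> \<le> \<alpha> * dist_pt_set d (J (x n)) (F (x n))"
      using hausdorff_le[of \<xi> "x n"] dist_J_F_limit_eq_0[OF x \<epsilon> lim] by simp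
    also have "\<dots> \<le> dist_pt_set d (J (x n)) (F (x n))"
      using \<alpha>_nonneg \<alpha>_less_1 dist_pt_set_nonneg[OF qpm F_nonempty]
      by (intro mult_left_le_one_le) auto
    also have "\<dots> \<le> \<epsilon> n" by (rule dist_J_F_le[OF x])
    finally show ?thesis by simp
  qed
  moreover have "(\<lambda>n. 2 * \<epsilon> n + sym_dist d (J (x n)) (J \<xi>)) \<longlonglongrightarrow> 0"
    using tendsto_add_zero[OF tendsto_mult_right_zero[OF \<epsilon>] lim] .
  ultimately show ?thesis by (intro LIMSEQ_le_const) auto
qed

end

theorem mainTheorem7:
  fixes d :: "'a \<Rightarrow> 'a \<Rightarrow> real" and J :: "'a \<Rightarrow> 'a" and F :: "'a \<Rightarrow> 'a set"
    and r \<alpha> :: real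
  assumes "bicomplete d"
    and "ds_continuous d J"
    and "r > 0" and "\<And>x y. r * d x y \<le> d (J x) (J y)"
    and "\<And>x. F x \<in> CB d"
    and "0 < \<alpha>" and "\<alpha> < 1/2"
    and "\<And>x y. hausdorff_qpm d (F x) (F y)
                 \<le> \<alpha> * (dist_pt_set d (J x) (F x) + dist_pt_set d (J y) (F y))"
    and "approx_mix_point d J F"
  shows "\<exists>x. J x \<in> F x"
proof -
  have qpm: "quasi_pseudometric d" and complete: "ds_complete d"
    using assms(1) unfolding bicomplete_def by auto
  interpret kannan_type_pair d J F \<alpha>
    using qpm assms(5-8) by unfold_locales auto
  define \<epsilon> where "\<epsilon> n = inverse (real (Suc n))" for n
  have "\<exists>u. \<forall>y\<in>F u. sym_dist d (J u) y \<le> \<epsilon> n" for n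
    using approx_mix_point_witness[OF qpm assms(5,9), of "\<epsilon> n"] less_imp_le
    unfolding \<epsilon>_def by fastforce
  then obtain x where x: "\<And>n. \<forall>y\<in>F (x n). sym_dist d (J (x n)) y \<le> \<epsilon> n" by metis
  have \<epsilon>: "\<epsilon> \<longlonglongrightarrow> 0" unfolding \<epsilon>_def by (rule LIMSEQ_inverse_real_of_nat)
  have "ds_cauchy d x" by (rule approx_seq_ds_cauchy[OF assms(3,4) x \<epsilon>])
  then obtain \<xi> where "(\<lambda>n. sym_dist d (x n) \<xi>) \<longlonglongrightarrow> 0"
    using ds_complete_limit[OF qpm complete] by blast
  then have lim: "(\<lambda>n. sym_dist d (J (x n)) (J \<xi>)) \<longlonglongrightarrow> 0"
    by (rule ds_continuous_LIMSEQ[OF qpm assms(2)])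
  have "J \<xi> \<in> F \<xi>"
    using mem_CB_if_dist_zero[OF qpm F_CB dist_J_F_limit_eq_0[OF x \<epsilon> lim]]
      dist_F_J_limit_le_0[OF x \<epsilon> lim] by blast
  then show ?thesis ..
qed

end
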